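(* Let $I\subset\mathbb{R}$ be an interval, $a,b\in I$ with $a<b$, and let $f:I\to\mathbb{R}$ be absolutely continuous on the interior $I^{\circ}$ of $I$ with $f''\in L[a,b]$. Let $q\ge 1$. If $|f''|^q$ belongs to the class $Q(I)$, then \begin{align*} &\left|\frac{1}{b-a}\int_a^b f(x)\,dx-\frac{1}{6}\left[f(a)+4f\left(\frac{a+b}{2}\right)+f(b)\right]\right|\\ &\le \frac{(b-a)^2}{6}\left(\frac{1}{27}\right)^{1-\frac1q}\Bigg\{\left[\left(6\ln 2-4\ln 3+\frac{7}{24}\right)|f''(a)|^q+\frac{5|f''(b)|^q}{24}\right]^{\frac1q}\\ &\qquad+\left[\left(6\ln 2-4\ln 3+\frac{7}{24}\right)|f''(b)|^q+\frac{5|f''(a)|^q}{24}\right]^{\frac1q}\Bigg\}. \end{align*}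
   Context: A function $g:I\to\mathbb{R}$ belongs to the class $Q(I)$ (is a Godunova–Levin function) if $g$ is non-negative and for all $x,y\in I$ and $t\in(0,1)$, \[ g(tx+(1-t)y)\le \frac{g(x)}{t}+\frac{g(y)}{1-t}. \] *)

theory Defs
  imports "HOL-Analysis.Analysis"
begin

definition GL_class :: "real set \<Rightarrow> (real \<Rightarrow> real) \<Rightarrow> bool" where
  "GL_class I g \<longleftrightarrow> (\<forall>x\<in>I. 0 \<le> g x) \<and>
     (\<forall>x\<in>I. \<forall>y\<in>I. \<forall>t::real. 0 < t \<and> t < 1 \<longrightarrow>
        g (t * x + (1 - t) * y) \<le> g x / t + g y / (1 - t))"

end

theory Submission
  imports Defs
begin

text \<open>
  On the left half \<open>[a, m]\<close>, \<open>m = (a + b)/2\<close>, \<open>h = b - a\<close>, two integrations by parts against the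
  kernel \<open>P x = (x - a)(3(x - a) - h)/6\<close> turn the Simpson error into \<open>\<integral> P f''\<close>; the right half is the
  mirror image under \<open>x \<mapsto> -x\<close>. Hoelder's inequality with weight \<open>|P|\<close> and the Godunova--Levin estimate
  \<open>|f'' x|\<^sup>q \<le> |f'' a|\<^sup>q h/(b - x) + |f'' b|\<^sup>q h/(x - a)\<close> reduce everything to elementary
  integrals: \<open>\<integral> |P| = h\<^sup>3/162\<close> gives the factor \<open>(1/27) powr (1 - 1/q)\<close>, and integrating \<open>|P|\<close> against
  \<open>h/(b - x)\<close> and \<open>h/(x - a)\<close> gives the constants \<open>6 ln 2 - 4 ln 3 + 7/24\<close> and \<open>5/24\<close>.
\<close>

lemma Young_powr_le:
  fixes q u \<alpha> :: real
  assumes q: "q \<ge> 1" and u: "u \<ge> 0" and \<alpha>: "\<alpha> > 0"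
  shows "u \<le> (1 - 1/q) * \<alpha> + (1/q) * (\<alpha> powr (1 - q) * u powr q)"
proof (cases "u = 0")
  case True
  then show ?thesis using q \<alpha> by (simp add: field_simps)
next
  case False
  define Y where "Y = \<alpha> powr (1 - q) * u powr q"
  have Y: "Y > 0" using False u \<alpha> by (simp add: Y_def)
  have "\<alpha> powr (1 - 1/q) * Y powr (1/q) = \<alpha> powr ((1 - 1/q) + (1 - q)/q) * u"
    using False u \<alpha> q by (simp add: Y_def powr_mult powr_powr powr_add)
  also have "(1 - 1/q) + (1 - q)/q = 0" using q by (simp add: field_simps)
  finally have "\<alpha> powr (1 - 1/q) * Y powr (1/q) = u" using \<alpha> by simp
  moreover have "\<alpha> powr (1 - 1/q) * Y powr (1/q) \<le> (1 - 1/q) * \<alpha> + (1/q) * Y"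
    using q \<alpha> Y by (intro Youngs_inequality_0) (auto simp: field_simps)
  ultimately show ?thesis by (simp add: Y_def)
qed

lemma le_of_Young_bounds:
  fixes q W M J :: real
  assumes q: "q \<ge> 1" and W: "W > 0" and M: "M \<ge> 0"
    and J: "\<And>\<alpha>. \<alpha> > 0 \<Longrightarrow> J \<le> (1 - 1/q) * \<alpha> * W + (1/q) * (\<alpha> powr (1 - q) * M)"
  shows "J \<le> W powr (1 - 1/q) * M powr (1/q)"
proof (cases "M = 0")
  case True
  show ?thesis
  proof (rule ccontr)
    assume "\<not> ?thesis"
    with True have "J > 0" by simp
    then have "J \<le> (1 - 1/q) * (J / (2 * W)) * W" using J[of "J / (2 * W)"] True W by simp
    also have "\<dots> \<le> J / 2" using q W \<open>J > 0\<close> by (simp add: field_simps)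
    finally show False using \<open>J > 0\<close> by simp
  qed
next
  case False
  with M have M: "M > 0" by simp
  \<comment> \<open>the minimising choice of \<alpha>\<close>
  define \<alpha> where "\<alpha> = (M / W) powr (1/q)"
  have \<alpha>: "\<alpha> > 0" using M W by (simp add: \<alpha>_def)
  have W_split: "W powr (1 - 1/q) = W / W powr (1/q)" "W powr (1/q - 1) = W powr (1/q) / W"
    using W by (simp_all add: powr_diff)
  have M_split: "M powr (1/q - 1) = M powr (1/q) / M" using M by (simp add: powr_diff)
  have first: "\<alpha> * W = W powr (1 - 1/q) * M powr (1/q)"
    using M W by (simp add: \<alpha>_def powr_divide W_split)
  have "\<alpha> powr (1 - q) * M = (M / W) powr ((1/q) * (1 - q)) * M"
    by (simp add: \<alpha>_def powr_powr)
  also have "(1/q) * (1 - q) = 1/q - 1" using q by (simp add: field_simps)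
  also have "(M / W) powr (1/q - 1) * M = W powr (1 - 1/q) * M powr (1/q)"
    using M W by (simp add: powr_divide W_split M_split)
  finally have second: "\<alpha> powr (1 - q) * M = W powr (1 - 1/q) * M powr (1/q)" .
  have "J \<le> (1 - 1/q) * \<alpha> * W + (1/q) * (\<alpha> powr (1 - q) * M)" using J[OF \<alpha>] .
  also have "\<dots> = W powr (1 - 1/q) * M powr (1/q)"
    using first second q by (simp add: field_simps)
  finally show ?thesis .
qed

text \<open>
  Hoelder's inequality for the weight \<open>w\<close>. It is derived from Young's inequality with an optimised
  parameter, so only the three Henstock--Kurzweil integrals are needed.
\<close>
lemma has_integral_abs_le_powr_mean:
  fixes \<phi> w F G :: "'a::euclidean_space \<Rightarrow> real"
  assumes q: "q \<ge> 1"
    and \<phi>: "(\<phi> has_integral J) S" and w: "(w has_integral W) S" and G: "(G has_integral M) S"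
    and W: "W > 0"
    and \<phi>_le: "\<And>x. x \<in> S \<Longrightarrow> \<bar>\<phi> x\<bar> \<le> w x * \<bar>F x\<bar>"
    and w_nonneg: "\<And>x. x \<in> S \<Longrightarrow> 0 \<le> w x"
    and G_ge: "\<And>x. x \<in> S \<Longrightarrow> w x * \<bar>F x\<bar> powr q \<le> G x"
  shows "\<bar>J\<bar> \<le> W powr (1 - 1/q) * M powr (1/q)"
proof (rule le_of_Young_bounds[OF q W])
  show "M \<ge> 0"
    using G by (rule has_integral_nonneg) (meson order_trans w_nonneg G_ge mult_nonneg_nonneg powr_ge_zero)
next
  fix \<alpha> :: real assume \<alpha>: "\<alpha> > 0"
  define R where "R x = (1 - 1/q) * \<alpha> * w x + (1/q) * (\<alpha> powr (1 - q) * G x)" for x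
  have R: "(R has_integral (1 - 1/q) * \<alpha> * W + (1/q) * (\<alpha> powr (1 - q) * M)) S"
    unfolding R_def by (intro has_integral_add has_integral_mult_right w G)
  have R_ge: "\<bar>\<phi> x\<bar> \<le> R x" if x: "x \<in> S" for x
  proof -
    have "\<bar>\<phi> x\<bar> \<le> w x * \<bar>F x\<bar>" using \<phi>_le[OF x] .
    also have "\<dots> \<le> w x * ((1 - 1/q) * \<alpha> + (1/q) * (\<alpha> powr (1 - q) * \<bar>F x\<bar> powr q))"
      using Young_powr_le[OF q _ \<alpha>] w_nonneg[OF x] by (intro mult_left_mono) auto
    also have "\<dots> = (1 - 1/q) * \<alpha> * w x + (1/q) * (\<alpha> powr (1 - q) * (w x * \<bar>F x\<bar> powr q))"
      by (simp add: algebra_simps)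
    also have "\<dots> \<le> R x"
      unfolding R_def using G_ge[OF x] q by (intro add_left_mono mult_left_mono) auto
    finally show ?thesis .
  qed
  have "J \<le> (1 - 1/q) * \<alpha> * W + (1/q) * (\<alpha> powr (1 - q) * M)"
    using has_integral_le[OF \<phi> R] R_ge by (meson abs_ge_self order_trans)
  moreover have "- J \<le> (1 - 1/q) * \<alpha> * W + (1/q) * (\<alpha> powr (1 - q) * M)"
    using has_integral_le[OF has_integral_neg[OF \<phi>] R] R_ge by (meson abs_ge_minus_self order_trans)
  ultimately show "\<bar>J\<bar> \<le> (1 - 1/q) * \<alpha> * W + (1/q) * (\<alpha> powr (1 - q) * M)" by simp
qed

lemma GL_class_le_endpoints:
  assumes g: "GL_class I g" and "a \<in> I" "b \<in> I" and x: "a < x" "x < b"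
  shows "g x \<le> g a * (b - a) / (b - x) + g b * (b - a) / (x - a)"
proof -
  define t where "t = (b - x) / (b - a)"
  have t: "0 < t" "t < 1" using x by (auto simp: t_def field_simps)
  have "t * (b - a) = b - x" using x by (simp add: t_def)
  then have "t * a + (1 - t) * b = x" by (simp add: algebra_simps)
  moreover have "1 - t = (x - a) / (b - a)" using x by (simp add: t_def field_simps)
  moreover have "g (t * a + (1 - t) * b) \<le> g a / t + g b / (1 - t)"
    using g assms(2,3) t unfolding GL_class_def by blast
  ultimately show ?thesis by (simp add: t_def)
qed

lemma has_integral_antiderivative_sign_change:
  fixes F g :: "real \<Rightarrow> real"
  assumes "u \<le> c" "c \<le> v" and F: "continuous_on {u..v} F"
    and left: "\<And>x. x \<in> {u<..<c} \<Longrightarrow> (F has_real_derivative g x) (at x)"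
    and right: "\<And>x. x \<in> {c<..<v} \<Longrightarrow> (F has_real_derivative - g x) (at x)"
  shows "(g has_integral 2 * F c - F u - F v) {u..v}"
proof -
  have I1: "(g has_integral F c - F u) {u..c}"
    using assms continuous_on_subset[OF F]
    by (intro fundamental_theorem_of_calculus_interior)
       (auto simp: has_real_derivative_iff_has_vector_derivative[symmetric])
  have "((\<lambda>x. - F x) has_real_derivative g x) (at x)" if "x \<in> {c<..<v}" for x
    using DERIV_minus[OF right[OF that]] by simp
  then have I2: "(g has_integral (- F v) - (- F c)) {c..v}"
    using assms continuous_on_subset[OF F]
    by (intro fundamental_theorem_of_calculus_interior)
       (auto simp: has_real_derivative_iff_has_vector_derivative[symmetric] intro!: continuous_intros)
  have "(F c - F u) + ((- F v) - (- F c)) = 2 * F c - F u - F v" by simp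
  with has_integral_combine[OF assms(1,2) I1 I2] show ?thesis by metis
qed

lemma simpson_kernel_abs_integral:
  fixes h :: real
  assumes h: "h > 0"
  shows "((\<lambda>t. t * \<bar>3 * t - h\<bar> / 6) has_integral h^3 / 162) {0..h/2}"
proof -
  define F where "F t = (h * t^2 / 2 - t^3) / 6" for t
  have "((\<lambda>t. t * \<bar>3 * t - h\<bar> / 6) has_integral 2 * F (h/3) - F 0 - F (h/2)) {0..h/2}"
  proof (rule has_integral_antiderivative_sign_change)
    fix t assume "t \<in> {0<..<h/3}"
    then have "\<bar>3 * t - h\<bar> = h - 3 * t" by auto
    then show "(F has_real_derivative t * \<bar>3 * t - h\<bar> / 6) (at t)"
      unfolding F_def by (auto intro!: derivative_eq_intros simp: field_simps power2_eq_square)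
  next
    fix t assume "t \<in> {h/3<..<h/2}"
    then have "\<bar>3 * t - h\<bar> = 3 * t - h" by auto
    then show "(F has_real_derivative - (t * \<bar>3 * t - h\<bar> / 6)) (at t)"
      unfolding F_def by (auto intro!: derivative_eq_intros simp: field_simps power2_eq_square)
  qed (use h in \<open>auto simp: F_def intro!: continuous_intros\<close>)
  moreover have "2 * F (h/3) - F 0 - F (h/2) = h^3 / 162"
    by (simp add: F_def field_simps power3_eq_cube power2_eq_square)
  ultimately show ?thesis by simp
qed

lemma simpson_kernel_GL_integral:
  fixes h A B :: real
  assumes h: "h > 0"
  shows "((\<lambda>t. t * \<bar>3 * t - h\<bar> / 6 * (A * h / (h - t) + B * h / t))
           has_integral h^3 / 6 * ((6 * ln 2 - 4 * ln 3 + 7/24) * A + 5 * B / 24)) {0..h/2}"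
proof -
  define F where "F t = A * (h / 6 * (3 * t^2 / 2 + 2 * h * t + 2 * h^2 * ln (h - t)))
                      + B * (h * (h * t - 3 * t^2 / 2) / 6)" for t
  have "((\<lambda>t. t * \<bar>3 * t - h\<bar> / 6 * (A * h / (h - t) + B * h / t))
          has_integral 2 * F (h/3) - F 0 - F (h/2)) {0..h/2}"
  proof (rule has_integral_antiderivative_sign_change)
    fix t assume t: "t \<in> {0<..<h/3}"
    then have "(F has_real_derivative t * (h - 3 * t) / 6 * (A * h / (h - t) + B * h / t)) (at t)"
      unfolding F_def by (auto intro!: derivative_eq_intros simp: field_simps power2_eq_square)
    moreover have "\<bar>3 * t - h\<bar> = h - 3 * t" using t by auto
    ultimately show "(F has_real_derivative t * \<bar>3 * t - h\<bar> / 6 * (A * h / (h - t) + B * h / t)) (at t)"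
      by simp
  next
    fix t assume t: "t \<in> {h/3<..<h/2}"
    then have "(F has_real_derivative - (t * (3 * t - h) / 6 * (A * h / (h - t) + B * h / t))) (at t)"
      unfolding F_def by (auto intro!: derivative_eq_intros simp: field_simps power2_eq_square)
    moreover have "\<bar>3 * t - h\<bar> = 3 * t - h" using t by auto
    ultimately show "(F has_real_derivative - (t * \<bar>3 * t - h\<bar> / 6 * (A * h / (h - t) + B * h / t))) (at t)"
      by simp
  qed (use h in \<open>auto simp: F_def intro!: continuous_intros\<close>)
  moreover have "2 * F (h/3) - F 0 - F (h/2) = h^3 / 6 * ((6 * ln 2 - 4 * ln 3 + 7/24) * A + 5 * B / 24)"
  proof -
    have ln_third: "ln (h - h/3) = ln 2 + ln h - ln 3"
      using h ln_div[of "2 * h" 3] ln_mult[of 2 h] by simp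
    have ln_half: "ln (h - h/2) = ln h - ln 2"
      using h ln_div[of h 2] by simp
    show ?thesis
      unfolding F_def ln_third ln_half diff_zero
      by (simp add: field_simps power3_eq_cube power2_eq_square)
  qed
  ultimately show ?thesis by simp
qed

lemma simpson_left_half_identity:
  fixes f f' f'' :: "real \<Rightarrow> real" and a h :: real
  assumes h: "h > 0"
    and f_cont: "continuous_on {a..a + h/2} f" and f'_cont: "continuous_on {a..a + h/2} f'"
    and f': "\<And>x. x \<in> {a<..<a + h/2} \<Longrightarrow> (f has_real_derivative f' x) (at x)"
    and f'': "\<And>x. x \<in> {a<..<a + h/2} \<Longrightarrow> (f' has_real_derivative f'' x) (at x)"
  shows "((\<lambda>x. (x - a) * (3 * (x - a) - h) / 6 * f'' x) has_integral
           h^2/24 * f' (a + h/2) - h/3 * f (a + h/2) - h/6 * f a + integral {a..a + h/2} f) {a..a + h/2}"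
proof -
  define H where "H x = (x - a) * (3 * (x - a) - h) / 6 * f' x - ((x - a) - h/6) * f x" for x
  have kernel_minus_f: "((\<lambda>x. (x - a) * (3 * (x - a) - h) / 6 * f'' x - f x) has_integral H (a + h/2) - H a) {a..a + h/2}"
  proof (rule fundamental_theorem_of_calculus_interior)
    show "continuous_on {a..a + h/2} H"
      unfolding H_def by (auto intro!: continuous_intros f_cont f'_cont)
    fix x assume x: "x \<in> {a<..<a + h/2}"
    have "(H has_real_derivative (x - a) * (3 * (x - a) - h) / 6 * f'' x - f x) (at x)"
      unfolding H_def by (auto intro!: derivative_eq_intros f'[OF x] f''[OF x] simp: field_simps)
    then show "(H has_vector_derivative (x - a) * (3 * (x - a) - h) / 6 * f'' x - f x) (at x)"
      by (simp add: has_real_derivative_iff_has_vector_derivative)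
  qed (use h in auto)
  have "(f has_integral integral {a..a + h/2} f) {a..a + h/2}"
    using f_cont by (intro integrable_integral integrable_continuous_real)
  from has_integral_add[OF kernel_minus_f this]
  have "((\<lambda>x. (x - a) * (3 * (x - a) - h) / 6 * f'' x) has_integral
                     H (a + h/2) - H a + integral {a..a + h/2} f) {a..a + h/2}"
    by simp
  moreover have "H (a + h/2) - H a = h^2/24 * f' (a + h/2) - h/3 * f (a + h/2) - h/6 * f a"
    by (simp add: H_def field_simps power2_eq_square)
  ultimately show ?thesis by simp
qed

lemma simpson_left_half_bound:
  fixes f f' f'' :: "real \<Rightarrow> real" and a h q A B :: real
  assumes h: "h > 0" and q: "q \<ge> 1"
    and f_cont: "continuous_on {a..a + h/2} f" and f'_cont: "continuous_on {a..a + h/2} f'"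
    and f': "\<And>x. x \<in> {a<..<a + h/2} \<Longrightarrow> (f has_real_derivative f' x) (at x)"
    and f'': "\<And>x. x \<in> {a<..<a + h/2} \<Longrightarrow> (f' has_real_derivative f'' x) (at x)"
    and GL: "\<And>x. x \<in> {a<..a + h/2} \<Longrightarrow> \<bar>f'' x\<bar> powr q \<le> A * h / (h - (x - a)) + B * h / (x - a)"
  shows "\<bar>h^2/24 * f' (a + h/2) - h/3 * f (a + h/2) - h/6 * f a + integral {a..a + h/2} f\<bar>
           \<le> h^3 / 6 * (1/27) powr (1 - 1/q) * ((6 * ln 2 - 4 * ln 3 + 7/24) * A + 5 * B / 24) powr (1/q)"
proof -
  define k where "k = h^3 / 6"
  define X where "X = (6 * ln 2 - 4 * ln 3 + 7/24) * A + 5 * B / 24"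
  define w where "w x = (x - a) * \<bar>3 * (x - a) - h\<bar> / 6" for x
  define G where "G x = w x * (A * h / (h - (x - a)) + B * h / (x - a))" for x
  have k: "k > 0" using h by (simp add: k_def)
  have w_int: "(w has_integral k / 27) {a..a + h/2}"
    using has_integral_shift_real_ivl[OF simpson_kernel_abs_integral[OF h], of "- a"]
    by (simp add: w_def[abs_def] k_def add.commute)
  have G_int: "(G has_integral k * X) {a..a + h/2}"
    using has_integral_shift_real_ivl[OF simpson_kernel_GL_integral[OF h, of A B], of "- a"]
    by (simp add: G_def[abs_def] w_def k_def X_def add.commute)
  have w_nonneg: "0 \<le> w x" if "x \<in> {a..a + h/2}" for x
    using that by (simp add: w_def)
  have G_ge: "w x * \<bar>f'' x\<bar> powr q \<le> G x" if x: "x \<in> {a..a + h/2}" for x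
  proof (cases "x = a")
    case False
    with x have "x \<in> {a<..a + h/2}" by auto
    from GL[OF this] w_nonneg[OF x] show ?thesis
      unfolding G_def by (rule mult_left_mono)
  qed (simp add: G_def w_def)
  have "\<bar>h^2/24 * f' (a + h/2) - h/3 * f (a + h/2) - h/6 * f a + integral {a..a + h/2} f\<bar>
          \<le> (k / 27) powr (1 - 1/q) * (k * X) powr (1/q)"
  proof (rule has_integral_abs_le_powr_mean[OF q simpson_left_half_identity[OF h f_cont f'_cont f' f''] w_int G_int])
    show "k / 27 > 0" using k by simp
  next
    fix x assume x: "x \<in> {a..a + h/2}"
    show "\<bar>(x - a) * (3 * (x - a) - h) / 6 * f'' x\<bar> \<le> w x * \<bar>f'' x\<bar>"
      using x by (simp add: w_def abs_mult)
    show "0 \<le> w x" using w_nonneg[OF x] .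
    show "w x * \<bar>f'' x\<bar> powr q \<le> G x" using G_ge[OF x] .
  qed
  also have "(k / 27) powr (1 - 1/q) * (k * X) powr (1/q) = k * (1/27) powr (1 - 1/q) * X powr (1/q)"
  proof -
    have "0 \<le> k * X"
      using G_int
    proof (rule has_integral_nonneg)
      fix x assume x: "x \<in> {a..a + h/2}"
      have "0 \<le> w x * \<bar>f'' x\<bar> powr q" using w_nonneg[OF x] by simp
      then show "0 \<le> G x" using G_ge[OF x] by linarith
    qed
    then have X: "X \<ge> 0" using k by (simp add: zero_le_mult_iff)
    have "(k / 27) powr (1 - 1/q) * (k * X) powr (1/q)
            = (k powr (1 - 1/q) * k powr (1/q)) * (1/27) powr (1 - 1/q) * X powr (1/q)"
      using k X by (simp add: powr_mult powr_divide)
    also have "k powr (1 - 1/q) * k powr (1/q) = k" using k by (simp add: powr_add[symmetric])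
    finally show ?thesis .
  qed
  finally show ?thesis by (simp add: k_def X_def)
qed

lemma simpson_right_half_bound:
  fixes f f' f'' :: "real \<Rightarrow> real" and b h q A B :: real
  assumes h: "h > 0" and q: "q \<ge> 1"
    and f_cont: "continuous_on {b - h/2..b} f" and f'_cont: "continuous_on {b - h/2..b} f'"
    and f': "\<And>x. x \<in> {b - h/2<..<b} \<Longrightarrow> (f has_real_derivative f' x) (at x)"
    and f'': "\<And>x. x \<in> {b - h/2<..<b} \<Longrightarrow> (f' has_real_derivative f'' x) (at x)"
    and GL: "\<And>x. x \<in> {b - h/2..<b} \<Longrightarrow> \<bar>f'' x\<bar> powr q \<le> A * h / (h - (b - x)) + B * h / (b - x)"
  shows "\<bar>- (h^2/24) * f' (b - h/2) - h/3 * f (b - h/2) - h/6 * f b + integral {b - h/2..b} f\<bar>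
           \<le> h^3 / 6 * (1/27) powr (1 - 1/q) * ((6 * ln 2 - 4 * ln 3 + 7/24) * A + 5 * B / 24) powr (1/q)"
proof -
  have reflect: "- y \<in> {b - h/2<..<b}" if "y \<in> {- b<..<- b + h/2}" for y
    using that by auto
  have "\<bar>h^2/24 * - f' (- (- b + h/2)) - h/3 * f (- (- b + h/2)) - h/6 * f (- (- b))
           + integral {- b..- b + h/2} (\<lambda>y. f (- y))\<bar>
         \<le> h^3 / 6 * (1/27) powr (1 - 1/q) * ((6 * ln 2 - 4 * ln 3 + 7/24) * A + 5 * B / 24) powr (1/q)"
  proof (rule simpson_left_half_bound[OF h q])
    show "continuous_on {- b..- b + h/2} (\<lambda>y. f (- y))"
      by (rule continuous_on_compose2[OF f_cont]) (auto intro!: continuous_intros)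
    show "continuous_on {- b..- b + h/2} (\<lambda>y. - f' (- y))"
      by (intro continuous_intros continuous_on_compose2[OF f'_cont]) (auto intro!: continuous_intros)
    fix y assume y: "y \<in> {- b<..<- b + h/2}"
    show "((\<lambda>y. f (- y)) has_real_derivative - f' (- y)) (at y)"
      using DERIV_chain2[OF f'[OF reflect[OF y]] DERIV_minus[OF DERIV_ident]] by simp
    show "((\<lambda>y. - f' (- y)) has_real_derivative f'' (- y)) (at y)"
      using DERIV_minus[OF DERIV_chain2[OF f''[OF reflect[OF y]] DERIV_minus[OF DERIV_ident]]] by simp
  next
    fix y assume y: "y \<in> {- b<..- b + h/2}"
    then have "- y \<in> {b - h/2..<b}" by auto
    from GL[OF this] show "\<bar>f'' (- y)\<bar> powr q \<le> A * h / (h - (y - - b)) + B * h / (y - - b)"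
      by (simp add: add.commute)
  qed
  moreover have "integral {- b..- b + h/2} (\<lambda>y. f (- y)) = integral {b - h/2..b} f"
    using Henstock_Kurzweil_Integration.integral_reflect_real[of b "b - h/2" f] by simp
  ultimately show ?thesis by simp
qed

lemma simpson_error_eq_half_errors:
  fixes f f' :: "real \<Rightarrow> real" and a b :: real
  assumes "a < b" and f_cont: "continuous_on {a..b} f"
  defines "h \<equiv> b - a" and "m \<equiv> (a + b) / 2"
  shows "(1 / (b - a)) * integral {a..b} f - (1/6) * (f a + 4 * f ((a + b) / 2) + f b)
           = ((h^2/24 * f' m - h/3 * f m - h/6 * f a + integral {a..m} f)
              + (- (h^2/24) * f' m - h/3 * f m - h/6 * f b + integral {m..b} f)) / h"
proof -
  have "a \<le> m" "m \<le> b" using \<open>a < b\<close> by (simp_all add: m_def)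
  then have "integral {a..b} f = integral {a..m} f + integral {m..b} f"
    using Henstock_Kurzweil_Integration.integral_combine[OF _ _ integrable_continuous_real[OF f_cont]] by simp
  then show ?thesis
    using \<open>a < b\<close> by (simp add: h_def m_def field_simps)
qed

lemma simpson_error_le_of_pointwise_bound:
  fixes f f' f'' :: "real \<Rightarrow> real" and a b q A B :: real
  assumes ab: "a < b" and q: "q \<ge> 1"
    and f_cont: "continuous_on {a..b} f" and f'_cont: "continuous_on {a..b} f'"
    and f': "\<And>x. x \<in> {a<..<b} \<Longrightarrow> (f has_real_derivative f' x) (at x)"
    and f'': "\<And>x. x \<in> {a<..<b} \<Longrightarrow> (f' has_real_derivative f'' x) (at x)"
    and GL: "\<And>x. x \<in> {a<..<b} \<Longrightarrow> \<bar>f'' x\<bar> powr q \<le> A * (b - a) / (b - x) + B * (b - a) / (x - a)"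
  shows "\<bar>(1 / (b - a)) * integral {a..b} f - (1/6) * (f a + 4 * f ((a + b) / 2) + f b)\<bar>
    \<le> (b - a)^2 / 6 * (1/27) powr (1 - 1/q) *
       (((6 * ln 2 - 4 * ln 3 + 7/24) * A + 5 * B / 24) powr (1/q)
       + ((6 * ln 2 - 4 * ln 3 + 7/24) * B + 5 * A / 24) powr (1/q))"
proof -
  define h where "h = b - a"
  have h: "h > 0" and mid: "a + h/2 = (a + b) / 2" "b - h/2 = (a + b) / 2"
    using ab by (simp_all add: h_def field_simps)
  note half_hyps = ab GL f' f'' continuous_on_subset[OF f_cont] continuous_on_subset[OF f'_cont]
  have left: "\<bar>h^2/24 * f' ((a + b) / 2) - h/3 * f ((a + b) / 2) - h/6 * f a + integral {a..(a + b) / 2} f\<bar>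
      \<le> h^3 / 6 * (1/27) powr (1 - 1/q) * ((6 * ln 2 - 4 * ln 3 + 7/24) * A + 5 * B / 24) powr (1/q)"
    (is "\<bar>?L\<bar> \<le> h^3 / 6 * ?c * ?X1")
    by (rule simpson_left_half_bound[OF h q, where a = a and f = f and f' = f' and f'' = f'', unfolded mid])
      (use half_hyps in \<open>auto simp: h_def\<close>)
  have right: "\<bar>- (h^2/24) * f' ((a + b) / 2) - h/3 * f ((a + b) / 2) - h/6 * f b + integral {(a + b) / 2..b} f\<bar>
      \<le> h^3 / 6 * (1/27) powr (1 - 1/q) * ((6 * ln 2 - 4 * ln 3 + 7/24) * B + 5 * A / 24) powr (1/q)"
    (is "\<bar>?R\<bar> \<le> h^3 / 6 * ?c * ?X2")
    by (rule simpson_right_half_bound[OF h q, where b = b and f = f and f' = f' and f'' = f'', unfolded mid])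
      (use half_hyps in \<open>auto simp: h_def add.commute\<close>)
  have "\<bar>?L + ?R\<bar> / h \<le> (h^3 / 6 * ?c * ?X1 + h^3 / 6 * ?c * ?X2) / h"
    using left right h by (intro divide_right_mono order_trans[OF abs_triangle_ineq add_mono]) auto
  also have "\<dots> = (b - a)^2 / 6 * ?c * (?X1 + ?X2)"
    using h by (simp add: h_def field_simps power2_eq_square power3_eq_cube)
  finally show ?thesis
    using simpson_error_eq_half_errors[OF ab f_cont, of f'] h by (simp add: h_def abs_divide)
qed

theorem theorem2:
  fixes f f' f'' :: "real \<Rightarrow> real" and I :: "real set" and a b q :: real
  assumes "is_interval I" and "a \<in> I" and "b \<in> I" and "a < b"
    and "continuous_on I f" and "continuous_on I f'"
    and "\<And>x. x \<in> interior I \<Longrightarrow> (f has_real_derivative f' x) (at x)"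
    and "\<And>x. x \<in> interior I \<Longrightarrow> (f' has_real_derivative f'' x) (at x)"
    and "f'' absolutely_integrable_on {a..b}"
    and "q \<ge> 1"
    and "GL_class I (\<lambda>x. \<bar>f'' x\<bar> powr q)"
  shows "\<bar>(1 / (b - a)) * integral {a..b} f - (1/6) * (f a + 4 * f ((a + b) / 2) + f b)\<bar>
    \<le> (b - a)^2 / 6 * (1/27) powr (1 - 1/q) *
       ( ((6 * ln 2 - 4 * ln 3 + 7/24) * \<bar>f'' a\<bar> powr q + 5 * \<bar>f'' b\<bar> powr q / 24) powr (1/q)
       + ((6 * ln 2 - 4 * ln 3 + 7/24) * \<bar>f'' b\<bar> powr q + 5 * \<bar>f'' a\<bar> powr q / 24) powr (1/q))"
proof (rule simpson_error_le_of_pointwise_bound[OF assms(4,10)])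
  have sub: "{a..b} \<subseteq> I"
    using mem_is_interval_1_I[OF assms(1-3)] by auto
  then show "continuous_on {a..b} f" "continuous_on {a..b} f'"
    using assms(5,6) continuous_on_subset by blast+
  fix x assume x: "x \<in> {a<..<b}"
  then have "x \<in> interior I"
    using interior_mono[OF sub] by auto
  then show "(f has_real_derivative f' x) (at x)" "(f' has_real_derivative f'' x) (at x)"
    using assms(7,8) by blast+
  show "\<bar>f'' x\<bar> powr q \<le> \<bar>f'' a\<bar> powr q * (b - a) / (b - x) + \<bar>f'' b\<bar> powr q * (b - a) / (x - a)"
    using GL_class_le_endpoints[OF assms(11,2,3)] x by auto
qed

end
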